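(* Assume $C\succ 0$, the matrices $A_1,\dots,A_m$ are linearly independent, and $C^{-1}$ is linearly feasible, i.e. $\mathrm{tr}(A_\ell C^{-1})=b_\ell$ for all $\ell\in[m]$. Let $X(t)$ be a differentiable solution of the first-ansatz dynamics $$\mathrm{vec}(\dot X) = -\bigl(I - G\mathcal{A}^T(\mathcal{A}G\mathcal{A}^T)^{-1} \mathcal{A}\bigr)G\,\mathrm{vec}(C),\qquad G=\tfrac12\bigl(C^{-1}\otimes X + X\otimes C^{-1}\bigr),$$ with $X(0)\succ 0$ linearly feasible. Then at every time $t$ with $X(t)\succ 0$, $$\frac{d}{dt}\ln\det X(t) = -n + b^T(\mathcal{A}G\mathcal{A}^T)^{-1}b \ \ge\ -n .$$ Consequently $X(T)\succ 0$ for every finite $T\ge 0$.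
   Context: We consider the SDP $\min\{\mathrm{tr}(CX): \mathrm{tr}(A_\ell X)=b_\ell\ \forall \ell\in[m],\ X\succeq 0\}$ with symmetric $n\times n$ matrices $C,A_1,\dots,A_m$ and $b\in\mathbb{R}^m$. For an $n\times n$ matrix $M$, $\mathrm{vec}(M)\in\mathbb{R}^{n^2}$ is obtained by stacking the columns of $M$; $\otimes$ is the Kronecker product, with $\mathrm{vec}(ABC)=(C^T\otimes A)\mathrm{vec}(B)$. $\mathcal{A}$ is the $m\times n^2$ matrix whose $\ell$-th row is $\mathrm{vec}(A_\ell)^T$. A matrix $X$ is linearly feasible if $\mathcal{A}\,\mathrm{vec}(X)=b$. *)

theory Defs
  imports "HOL-Analysis.Analysis"
begin

text \<open>vec(M): entries of M indexed by pairs (row i, column j); the pair type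
  plays the role of the column-stacked index (j-1)n+i.\<close>
definition vecm :: "real^'n^'n \<Rightarrow> real^('n \<times> 'n)" where
  "vecm M = (\<chi> p. M $ fst p $ snd p)"

text \<open>Kronecker product, compatible with column stacking:
  (P \<otimes> Q)_{(i,j),(k,l)} = P_{jl} Q_{ik}, so that vec(A B C) = (C^T \<otimes> A) vec(B).\<close>
definition kron :: "real^'n^'n \<Rightarrow> real^'n^'n \<Rightarrow> real^('n \<times> 'n)^('n \<times> 'n)" where
  "kron P Q = (\<chi> p q. P $ snd p $ snd q * Q $ fst p $ fst q)"

definition symmetric_mat :: "real^'n^'n \<Rightarrow> bool" where
  "symmetric_mat M \<longleftrightarrow> transpose M = M"

definition posdef :: "real^'n^'n \<Rightarrow> bool" where
  "posdef M \<longleftrightarrow> symmetric_mat M \<and> (\<forall>x. x \<noteq> 0 \<longrightarrow> x \<bullet> (M *v x) > 0)"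

definition constr_mat :: "('m \<Rightarrow> real^'n^'n) \<Rightarrow> real^('n \<times> 'n)^'m" where
  "constr_mat A = (\<chi> l. vecm (A l))"

definition Gmat :: "real^'n^'n \<Rightarrow> real^'n^'n \<Rightarrow> real^('n \<times> 'n)^('n \<times> 'n)" where
  "Gmat C X = (1/2) *\<^sub>R (kron (matrix_inv C) X + kron X (matrix_inv C))"

end

theory Submission
  imports Defs
begin

text \<open>Write \<open>M = \<A> G \<A>\<^sup>T\<close>. The flow satisfies \<open>\<A> vec(X') = 0\<close>, so linear feasibility
  is preserved, and \<open>X'\<close> is symmetric. Jacobi's formula gives
  \<open>d/dt ln det X = tr(X\<^sup>-\<^sup>1 X') = vec(X\<^sup>-\<^sup>1)\<^sup>T vec(X')\<close>; since \<open>G vec(C) = vec(X)\<close>,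
  \<open>G vec(X\<^sup>-\<^sup>1) = vec(C\<^sup>-\<^sup>1)\<close> and \<open>\<A> vec(C\<^sup>-\<^sup>1) = b\<close>, this equals \<open>-n + b\<^sup>T M\<^sup>-\<^sup>1 b\<close>,
  and \<open>M\<close> is positive definite because \<open>y\<^sup>T M y = tr(X S C\<^sup>-\<^sup>1 S)\<close> with \<open>S = \<Sum> y\<^sub>l A\<^sub>l\<close>.
  Hence \<open>det X(t) \<ge> e\<^sup>-\<^sup>n\<^sup>t det X(0)\<close> as long as \<open>X\<close> stays positive definite. At a first
  exit time \<open>X\<close> would be a positive semidefinite limit with positive determinant, hence
  positive definite, and positive definiteness is an open condition: so there is no exit time.\<close>

lemma matrix_inv_right:
  fixes X :: "'a::semiring_1^'n^'n"
  assumes "invertible X"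
  shows "X ** matrix_inv X = mat 1"
  using someI_ex[OF assms[unfolded invertible_def]] by (simp add: matrix_inv_def)

lemma matrix_inv_left:
  fixes X :: "'a::semiring_1^'n^'n"
  assumes "invertible X"
  shows "matrix_inv X ** X = mat 1"
  using someI_ex[OF assms[unfolded invertible_def]] by (simp add: matrix_inv_def)

lemma transpose_add: "transpose (P + Q) = transpose P + transpose Q"
  by (simp add: vec_eq_iff transpose_def)

lemma transpose_diff: "transpose (P - Q) = transpose P - transpose Q"
  by (simp add: vec_eq_iff transpose_def)

section \<open>Column stacking and the Kronecker product\<close>

lemma sum_UNIV_pair:
  "(\<Sum>p\<in>(UNIV::('a::finite \<times> 'b::finite) set). f p) = (\<Sum>i\<in>UNIV. \<Sum>j\<in>UNIV. f (i, j))"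
  unfolding sum.cartesian_product UNIV_Times_UNIV[symmetric] by (simp add: case_prod_beta)

lemma vecm_nth [simp]: "vecm M $ (i, j) = M $ i $ j"
  by (simp add: vecm_def)

lemma vecm_add: "vecm (P + Q) = vecm P + vecm Q"
  by (simp add: vec_eq_iff vecm_def)

lemma vecm_diff: "vecm (P - Q) = vecm P - vecm Q"
  by (simp add: vec_eq_iff vecm_def)

lemma vecm_scaleR: "vecm (c *\<^sub>R P) = c *\<^sub>R vecm P"
  by (simp add: vec_eq_iff vecm_def)

lemma vecm_inject: "vecm P = vecm Q \<longleftrightarrow> P = Q"
  by (auto simp: vec_eq_iff vecm_def)

lemma linear_vecm: "linear vecm"
  by (rule linearI) (simp_all add: vecm_add vecm_scaleR)

lemma inner_vecm_trace: "vecm V \<bullet> vecm W = trace (transpose V ** W)"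
  by (simp add: inner_vec_def sum_UNIV_pair trace_def matrix_matrix_mult_def transpose_def)
     (rule sum.swap)

lemma kron_mult_vecm: "kron P Q *v vecm B = vecm (Q ** B ** transpose P)"
proof -
  have "(kron P Q *v vecm B) $ (i, j) = vecm (Q ** B ** transpose P) $ (i, j)" for i j
    by (simp add: kron_def matrix_vector_mult_def matrix_matrix_mult_def transpose_def
        sum_UNIV_pair sum_distrib_right, subst sum.swap) (simp add: mult_ac)
  then show ?thesis by (simp add: vec_eq_iff)
qed

lemma transpose_kron: "transpose (kron P Q) = kron (transpose P) (transpose Q)"
  by (simp add: kron_def transpose_def vec_eq_iff)

lemma transpose_constr_mat_mult: "transpose (constr_mat A) *v w = vecm (\<Sum>l\<in>UNIV. w $ l *\<^sub>R A l)"
  by (simp add: vec_eq_iff constr_mat_def transpose_def matrix_vector_mult_def vecm_def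
      sum_component mult.commute)

lemma constr_mat_mult_nth: "(constr_mat A *v v) $ l = vecm (A l) \<bullet> v"
  by (simp add: constr_mat_def matrix_vector_mult_def inner_vec_def)

lemma Gmat_mult_vecm:
  assumes "transpose (matrix_inv C) = matrix_inv C"
  shows "Gmat C X *v vecm B =
    vecm ((1/2) *\<^sub>R (X ** B ** matrix_inv C + matrix_inv C ** B ** transpose X))"
  by (simp add: Gmat_def kron_mult_vecm assms scaleR_matrix_vector_assoc[symmetric]
      matrix_vector_mult_add_rdistrib vecm_add vecm_scaleR)

lemma transpose_Gmat:
  assumes "transpose (matrix_inv C) = matrix_inv C" "transpose X = X"
  shows "transpose (Gmat C X) = Gmat C X"
  unfolding Gmat_def transpose_scalar transpose_add transpose_kron assms ..

section \<open>Linear functionals and determinants along curves\<close>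

lemma linear_has_vector_derivative:
  fixes f :: "'a::euclidean_space \<Rightarrow> 'b::real_normed_vector"
  assumes "linear f" "(X has_vector_derivative X') F"
  shows "((\<lambda>s. f (X s)) has_vector_derivative f X') F"
proof -
  have "bounded_linear f" using assms(1) by (simp only: linear_conv_bounded_linear)
  then show ?thesis using assms(2) by (rule bounded_linear.has_vector_derivative)
qed

lemma linear_has_real_derivative:
  fixes f :: "'a::euclidean_space \<Rightarrow> real"
  assumes "linear f" "(X has_vector_derivative X') F"
  shows "((\<lambda>s. f (X s)) has_real_derivative f X') F"
  using linear_has_vector_derivative[OF assms] by (simp add: has_real_derivative_iff_has_vector_derivative)

lemma linear_const_if_derivative_kernel:
  fixes f :: "'a::euclidean_space \<Rightarrow> 'b::real_normed_vector"
  assumes "linear f" "convex S"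
    and "\<And>s. s \<in> S \<Longrightarrow> (X has_vector_derivative X' s) (at s within S)"
    and "\<And>s. s \<in> S \<Longrightarrow> f (X' s) = 0"
    and "s \<in> S" "u \<in> S"
  shows "f (X s) = f (X u)"
proof -
  have "((\<lambda>s. f (X s)) has_vector_derivative 0) (at s within S)" if "s \<in> S" for s
    using linear_has_vector_derivative[OF assms(1) assms(3)[OF that]] assms(4)[OF that] by simp
  then obtain c where "\<And>s. s \<in> S \<Longrightarrow> f (X s) = c"
    using has_vector_derivative_zero_constant[OF assms(2), where f = "\<lambda>s. f (X s)"] by blast
  then show ?thesis using assms(5,6) by simp
qed

lemma has_real_derivative_det_rows:
  fixes X :: "real \<Rightarrow> real^'n^'n"
  assumes "(X has_vector_derivative X') (at t within S)"
  shows "((\<lambda>s. det (X s)) has_real_derivative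
          (\<Sum>k\<in>UNIV. det (\<chi> i. if i = k then X' $ i else X t $ i))) (at t within S)"
proof -
  have entry: "((\<lambda>s. X s $ i $ j) has_real_derivative X' $ i $ j) (at t within S)" for i j
    by (rule linear_has_real_derivative[OF _ assms, of "\<lambda>M. M $ i $ j"]) (simp add: linearI)
  have "((\<lambda>s. \<Prod>i\<in>UNIV. X s $ i $ p i) has_derivative
      (\<lambda>h. \<Sum>k\<in>UNIV. X' $ k $ p k * h * (\<Prod>i\<in>UNIV-{k}. X t $ i $ p i))) (at t within S)"
    for p :: "'n \<Rightarrow> 'n"
    using entry unfolding has_field_derivative_def by (intro has_derivative_prod) auto
  then have prod: "((\<lambda>s. \<Prod>i\<in>UNIV. X s $ i $ p i) has_real_derivative
      (\<Sum>k\<in>UNIV. X' $ k $ p k * (\<Prod>i\<in>UNIV-{k}. X t $ i $ p i))) (at t within S)"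
    for p :: "'n \<Rightarrow> 'n"
    unfolding has_field_derivative_def
    by (rule has_derivative_eq_rhs) (auto simp: fun_eq_iff sum_distrib_left mult_ac)
  have row: "det (\<chi> i. if i = k then X' $ i else X t $ i) =
      (\<Sum>p\<in>{p. p permutes UNIV}. of_int (sign p) * (X' $ k $ p k * (\<Prod>i\<in>UNIV-{k}. X t $ i $ p i)))" for k
    unfolding det_def by (simp add: prod.remove[of UNIV k])
  show ?thesis
    unfolding row unfolding det_def
    by (subst sum.swap) (intro DERIV_sum, simp only: sum_distrib_left[symmetric], intro DERIV_cmult prod)
qed

lemma sum_det_replace_row:
  fixes Y :: "real^'n^'n"
  assumes "invertible Y"
  shows "(\<Sum>k\<in>UNIV. det (\<chi> i. if i = k then H $ i else Y $ i)) = det Y * trace (matrix_inv Y ** H)"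
proof -
  have inv: "transpose Y ** transpose (matrix_inv Y) = mat 1"
    using matrix_inv_left[OF assms] by (metis matrix_transpose_mul transpose_mat)
  define z where "z k = transpose (matrix_inv Y) *v H $ k" for k
  have row: "row i Y = Y $ i" for i
    by (simp add: row_def vec_eq_iff)
  have H: "H $ k = (\<Sum>i\<in>UNIV. z k $ i *s Y $ i)" for k
  proof -
    have "H $ k = transpose Y *v z k"
      by (simp add: z_def matrix_vector_mul_assoc inv del: transpose_matrix_vector)
    then show ?thesis
      by (simp add: vec_eq_iff matrix_vector_mult_def transpose_def sum_component mult.commute
          del: transpose_matrix_vector)
  qed
  have "det (\<chi> i. if i = k then H $ i else Y $ i) = z k $ k * det Y" for k
  proof -
    have "(\<chi> i. if i = k then H $ i else Y $ i) =
        (\<chi> i. if i = k then \<Sum>i\<in>UNIV. z k $ i *s row i Y else row i Y)"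
      by (simp only: H row) (intro arg_cong[where f = vec_lambda] ext, simp)
    then show ?thesis using cramer_lemma_transpose[of k "z k" Y] by simp
  qed
  then have "(\<Sum>k\<in>UNIV. det (\<chi> i. if i = k then H $ i else Y $ i)) = (\<Sum>k\<in>UNIV. z k $ k) * det Y"
    by (simp add: sum_distrib_right)
  also have "(\<Sum>k\<in>UNIV. z k $ k) = trace (matrix_inv Y ** H)"
    by (simp add: z_def trace_def matrix_matrix_mult_def matrix_vector_mult_def transpose_def
        del: transpose_matrix_vector) (rule sum.swap)
  finally show ?thesis by simp
qed

lemma has_real_derivative_ln_det:
  fixes X :: "real \<Rightarrow> real^'n^'n"
  assumes "(X has_vector_derivative X') (at t within S)" "det (X t) > 0"
  shows "((\<lambda>s. ln (det (X s))) has_real_derivative trace (matrix_inv (X t) ** X')) (at t within S)"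
proof -
  have "invertible (X t)" using assms(2) by (simp add: invertible_det_nz)
  then have "((\<lambda>s. det (X s)) has_real_derivative det (X t) * trace (matrix_inv (X t) ** X'))
      (at t within S)"
    using has_real_derivative_det_rows[OF assms(1)] by (simp add: sum_det_replace_row)
  from DERIV_chain2[OF DERIV_ln_divide[OF assms(2)] this] show ?thesis
    using assms(2) by simp
qed

section \<open>Positive definite and semidefinite matrices\<close>

definition possemidef :: "real^'n^'n \<Rightarrow> bool" where
  "possemidef M \<longleftrightarrow> symmetric_mat M \<and> (\<forall>x. 0 \<le> x \<bullet> (M *v x))"

lemma symmetric_mat_nth: "symmetric_mat M \<Longrightarrow> M $ i $ j = M $ j $ i"
  unfolding symmetric_mat_def by (metis transpose_def vec_lambda_beta)

lemma posdef_transpose: "posdef M \<Longrightarrow> transpose M = M"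
  by (simp add: posdef_def symmetric_mat_def)

lemma posdef_quad_nonneg: "posdef M \<Longrightarrow> 0 \<le> x \<bullet> (M *v x)"
  unfolding posdef_def by (cases "x = 0") (auto intro: less_imp_le)

lemma posdef_imp_possemidef: "posdef M \<Longrightarrow> possemidef M"
  unfolding possemidef_def using posdef_quad_nonneg by (auto simp: posdef_def)

lemma posdef_invertible:
  assumes "posdef M"
  shows "invertible M"
  unfolding invertible_left_inverse matrix_left_invertible_ker
proof (intro allI impI)
  fix x assume "M *v x = 0"
  then show "x = 0" using assms unfolding posdef_def by force
qed

lemma posdef_matrix_inv:
  assumes "posdef M"
  shows "posdef (matrix_inv M)"
proof -
  let ?N = "matrix_inv M"
  have inv: "M ** ?N = mat 1" "?N ** M = mat 1"
    using posdef_invertible[OF assms] by (simp_all add: matrix_inv_right matrix_inv_left)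
  have "transpose ?N ** M = mat 1"
    using arg_cong[OF inv(1), of transpose] by (simp add: matrix_transpose_mul posdef_transpose[OF assms])
  then have "transpose ?N = ?N"
    by (metis inv(1) matrix_mul_assoc matrix_mul_lid matrix_mul_rid)
  moreover have "x \<bullet> (?N *v x) > 0" if "x \<noteq> 0" for x
  proof -
    have Mu: "M *v (?N *v x) = x" by (simp add: matrix_vector_mul_assoc inv)
    then have "?N *v x \<noteq> 0" using that by auto
    then have "(?N *v x) \<bullet> (M *v (?N *v x)) > 0" using assms unfolding posdef_def by blast
    then show ?thesis by (simp add: Mu inner_commute)
  qed
  ultimately show ?thesis by (simp add: posdef_def symmetric_mat_def)
qed

lemma inner_matrix_vector_mult: "x \<bullet> (M *v y) = (transpose M *v x) \<bullet> (y::real^'n)"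
  by (simp add: dot_lmul_matrix)

lemma symmetric_mat_inner:
  assumes "symmetric_mat M"
  shows "x \<bullet> (M *v y) = y \<bullet> (M *v x)"
proof -
  have "x \<bullet> (M *v y) = (M *v x) \<bullet> y"
    using inner_matrix_vector_mult[of x M y] assms
    by (simp only: symmetric_mat_def)
  then show ?thesis by (simp add: inner_commute)
qed

definition outer :: "real^'n \<Rightarrow> real^'n^'n" where
  "outer y = (\<chi> i j. y $ i * y $ j)"

lemma outer_mult: "outer y *v x = (y \<bullet> x) *\<^sub>R y"
  by (simp add: vec_eq_iff outer_def matrix_vector_mult_def inner_vec_def sum_distrib_left mult_ac)

lemma quad_form_diff_scaleR:
  assumes "symmetric_mat M"
  shows "(x - a *\<^sub>R e) \<bullet> (M *v (x - a *\<^sub>R e)) =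
     x \<bullet> (M *v x) - 2 * a * (e \<bullet> (M *v x)) + a\<^sup>2 * (e \<bullet> (M *v e))"
proof -
  have "x \<bullet> (M *v e) = e \<bullet> (M *v x)"
    using symmetric_mat_inner[OF assms] .
  then show ?thesis
    by (simp add: matrix_vector_mult_diff_distrib matrix_vector_mult_scaleR inner_diff_left
        inner_diff_right power2_eq_square algebra_simps)
qed

text \<open>Symmetric Gaussian elimination: each pivot splits off a rank-one term and leaves a
  positive semidefinite matrix supported on fewer indices.\<close>

lemma possemidef_supported_sum_outer:
  fixes I :: "'n::finite set"
  assumes "finite I" "possemidef M" "\<And>i j. i \<notin> I \<or> j \<notin> I \<Longrightarrow> M $ i $ j = 0"
  shows "\<exists>ys. M = sum_list (map outer ys)"
  using assms
proof (induction I arbitrary: M rule: finite_induct)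
  case empty
  then have "M = 0" by (simp add: vec_eq_iff)
  then show ?case by (intro exI[of _ "[]"]) simp
next
  case (insert k I)
  have sym: "symmetric_mat M" and psd: "\<And>x. 0 \<le> x \<bullet> (M *v x)"
    using insert.prems(1) by (auto simp: possemidef_def)
  let ?e = "\<lambda>i. axis i (1::real) :: real^'n"
  have mult_axis: "(M *v ?e j) $ i = M $ i $ j" for i j
    by (simp add: matrix_vector_mult_basis column_def)
  then have quad_axis: "?e i \<bullet> (M *v ?e j) = M $ i $ j" for i j
    by (simp add: inner_axis')
  show ?case
  proof (cases "M $ k $ k = 0")
    case True
    have row_k: "M $ k $ j = 0" for j
    proof (rule ccontr)
      assume ne: "M $ k $ j \<noteq> 0"
      define a where "a = (M $ j $ j + 1) / (2 * M $ k $ j)"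
      have "0 \<le> (?e j - a *\<^sub>R ?e k) \<bullet> (M *v (?e j - a *\<^sub>R ?e k))"
        by (rule psd)
      also have "\<dots> = M $ j $ j - 2 * a * M $ k $ j"
        using quad_form_diff_scaleR[OF sym] True by (simp add: quad_axis)
      also have "\<dots> = -1" using ne by (simp add: a_def field_simps)
      finally show False by simp
    qed
    have "M $ i $ j = 0" if "i \<notin> I \<or> j \<notin> I" for i j
      using that insert.prems(2) row_k symmetric_mat_nth[OF sym] by (metis insert_iff)
    then show ?thesis using insert.IH insert.prems(1) by blast
  next
    case False
    define c where "c = M $ k $ k"
    have c: "0 < c"
      using False psd[of "?e k"] by (simp add: quad_axis c_def)
    define y where "y = (\<chi> i. M $ i $ k / sqrt c)"
    define M' where "M' = M - outer y"
    have outer_y: "outer y $ i $ j = M $ i $ k * M $ j $ k / c" for i j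
      using c by (simp add: outer_def y_def real_sqrt_mult[symmetric] power2_eq_square[symmetric])
    have "symmetric_mat M'"
      using symmetric_mat_nth[OF sym]
      by (simp add: symmetric_mat_def M'_def vec_eq_iff transpose_def outer_y mult.commute)
    moreover have "0 \<le> x \<bullet> (M' *v x)" for x
    proof -
      define \<beta> where "\<beta> = (M *v x) $ k"
      have y_x: "y \<bullet> x = \<beta> / sqrt c"
        using symmetric_mat_nth[OF sym]
        by (simp add: \<beta>_def y_def inner_vec_def matrix_vector_mult_def sum_divide_distrib mult.commute)
      have "0 \<le> (x - (\<beta> / c) *\<^sub>R ?e k) \<bullet> (M *v (x - (\<beta> / c) *\<^sub>R ?e k))"
        by (rule psd)
      also have "\<dots> = x \<bullet> (M *v x) - \<beta>\<^sup>2 / c"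
        using c by (simp add: quad_form_diff_scaleR[OF sym] quad_axis mult_axis inner_axis' \<beta>_def c_def
            field_simps power2_eq_square)
      also have "\<dots> = x \<bullet> (M' *v x)"
        using c by (simp add: M'_def matrix_vector_mult_diff_rdistrib inner_diff_right outer_mult
            inner_commute[of x y] y_x power_divide power2_eq_square)
      finally show ?thesis .
    qed
    ultimately have "possemidef M'" by (simp add: possemidef_def)
    moreover have "M' $ i $ j = 0" if ij: "i \<notin> I \<or> j \<notin> I" for i j
    proof -
      consider "i = k" | "j = k" | "i \<notin> insert k I" | "j \<notin> insert k I"
        using ij by auto
      then show ?thesis
        using c symmetric_mat_nth[OF sym] insert.prems(2)
        by cases (simp_all add: M'_def outer_y c_def)
    qed
    ultimately obtain ys where "M' = sum_list (map outer ys)"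
      using insert.IH[of M'] by blast
    then have "M = sum_list (map outer (y # ys))" by (simp add: M'_def algebra_simps)
    then show ?thesis by blast
  qed
qed

lemma possemidef_sum_outer: "possemidef M \<Longrightarrow> \<exists>ys. M = sum_list (map outer ys)"
  using possemidef_supported_sum_outer[of UNIV M] by simp

lemma possemidef_quad_eq_0:
  assumes "possemidef M" "x \<bullet> (M *v x) = 0"
  shows "M *v x = 0"
proof -
  obtain ys where M: "M = sum_list (map outer ys)"
    using possemidef_sum_outer[OF assms(1)] by blast
  have "x \<bullet> (M *v x) = (\<Sum>y\<leftarrow>ys. (y \<bullet> x)\<^sup>2)"
    unfolding M by (induction ys) (simp_all add: matrix_vector_mult_add_rdistrib outer_mult
        inner_add_right power2_eq_square inner_commute)
  then have "(\<Sum>y\<leftarrow>ys. (y \<bullet> x)\<^sup>2) = 0"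
    using assms(2) by simp
  then have "\<forall>y\<in>set ys. (y \<bullet> x)\<^sup>2 = 0"
    by (subst (asm) sum_list_nonneg_eq_0_iff) auto
  then show ?thesis
    unfolding M by (induction ys) (simp_all add: matrix_vector_mult_add_rdistrib outer_mult)
qed

lemma posdef_iff_possemidef_invertible: "posdef M \<longleftrightarrow> possemidef M \<and> invertible M"
proof
  assume "possemidef M \<and> invertible M"
  then have "x \<bullet> (M *v x) > 0" if "x \<noteq> 0" for x
    using that possemidef_quad_eq_0[of M x]
    unfolding possemidef_def invertible_left_inverse matrix_left_invertible_ker
    by (metis order_le_less)
  then show "posdef M"
    using \<open>possemidef M \<and> invertible M\<close> by (simp add: posdef_def possemidef_def)
qed (simp add: posdef_imp_possemidef posdef_invertible)

lemma trace_posdef_possemidef_pos: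
  assumes "posdef P" "possemidef M" "M \<noteq> 0"
  shows "trace (P ** M) > 0"
proof -
  obtain ys where M: "M = sum_list (map outer ys)"
    using possemidef_sum_outer[OF assms(2)] by blast
  have "trace (P ** outer y) = y \<bullet> (P *v y)" for y
    using symmetric_mat_nth[of P] assms(1)
    by (simp add: trace_def matrix_matrix_mult_def outer_def inner_vec_def matrix_vector_mult_def
        sum_distrib_left mult_ac posdef_def)
  then have trace: "trace (P ** M) = (\<Sum>y\<leftarrow>ys. y \<bullet> (P *v y))"
    unfolding M by (induction ys) (simp_all add: matrix_add_ldistrib trace_add trace_0[simplified])
  obtain y where y: "y \<in> set ys" "y \<noteq> 0"
  proof (rule ccontr)
    assume "\<not> thesis"
    with that have "map outer ys = map (\<lambda>_. 0) ys"
      by (auto simp: outer_def vec_eq_iff)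
    then have "M = sum_list (map (\<lambda>_. 0) ys)" using M by metis
    then show False using assms(3) by (induction ys) auto
  qed
  have nonneg: "0 \<le> z" if "z \<in> set (map (\<lambda>y. y \<bullet> (P *v y)) ys)" for z
    using that posdef_quad_nonneg[OF assms(1)] by auto
  have "y \<bullet> (P *v y) \<noteq> 0"
    using y(2) assms(1) unfolding posdef_def by (metis less_irrefl)
  then have "(\<Sum>y\<leftarrow>ys. y \<bullet> (P *v y)) \<noteq> 0"
    using y(1) by (subst sum_list_nonneg_eq_0_iff[OF nonneg]) auto
  moreover have "0 \<le> (\<Sum>y\<leftarrow>ys. y \<bullet> (P *v y))"
    using nonneg by (rule sum_list_nonneg)
  ultimately have "0 < (\<Sum>y\<leftarrow>ys. y \<bullet> (P *v y))" by simp
  then show ?thesis using trace by simp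
qed

lemma bounded_linear_quad_form: "bounded_linear (\<lambda>M::real^'n^'n. x \<bullet> (M *v x))"
  unfolding linear_conv_bounded_linear[symmetric]
  by (rule linearI)
    (simp_all add: matrix_vector_mult_add_rdistrib inner_add_right scaleR_matrix_vector_assoc[symmetric])

lemma bounded_linear_transpose: "bounded_linear (transpose :: real^'n^'m \<Rightarrow> real^'m^'n)"
  unfolding linear_conv_bounded_linear[symmetric]
  by (rule linearI) (simp_all add: vec_eq_iff transpose_def)

lemma possemidef_limit:
  fixes f :: "'a \<Rightarrow> real^'n^'n"
  assumes lim: "(f \<longlongrightarrow> M) F" and "F \<noteq> bot"
    and psd: "eventually (\<lambda>s. possemidef (f s)) F"
  shows "possemidef M"
proof -
  have "((\<lambda>s. transpose (f s)) \<longlongrightarrow> transpose M) F"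
    by (rule bounded_linear.tendsto[OF bounded_linear_transpose lim])
  moreover have "((\<lambda>s. transpose (f s)) \<longlongrightarrow> M) F"
    using lim by (rule Lim_transform_eventually)
      (use psd in \<open>auto elim!: eventually_mono simp: possemidef_def symmetric_mat_def\<close>)
  ultimately have "transpose M = M"
    by (rule tendsto_unique[OF \<open>F \<noteq> bot\<close>])
  moreover have "0 \<le> x \<bullet> (M *v x)" for x
  proof (rule tendsto_lowerbound[OF _ _ \<open>F \<noteq> bot\<close>])
    show "((\<lambda>s. x \<bullet> (f s *v x)) \<longlongrightarrow> x \<bullet> (M *v x)) F"
      by (rule bounded_linear.tendsto[OF bounded_linear_quad_form lim])
    show "eventually (\<lambda>s. 0 \<le> x \<bullet> (f s *v x)) F"
      using psd by (rule eventually_mono) (simp add: possemidef_def)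
  qed
  ultimately show ?thesis by (simp add: possemidef_def symmetric_mat_def)
qed

lemma posdef_coercive:
  assumes "posdef M"
  obtains e where "e > 0" "\<And>x. e * (x \<bullet> x) \<le> x \<bullet> (M *v x)"
proof -
  let ?q = "\<lambda>x. x \<bullet> (M *v x)"
  have "continuous_on (sphere 0 1) ?q"
    by (intro continuous_on_inner continuous_on_id matrix_vector_mult_linear_continuous_on)
  moreover have "axis undefined 1 \<in> sphere (0::real^'n) 1"
    by simp
  ultimately obtain x0 where x0: "x0 \<in> sphere 0 1" "\<And>y. y \<in> sphere 0 1 \<Longrightarrow> ?q x0 \<le> ?q y"
    using continuous_attains_inf[OF compact_sphere, of 0 1 ?q] by blast
  have "x0 \<noteq> 0" using x0(1) by auto
  then have pos: "?q x0 > 0" using assms unfolding posdef_def by blast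
  have "?q x0 * (x \<bullet> x) \<le> ?q x" for x
  proof (cases "x = 0")
    case False
    then have "?q x0 \<le> ?q ((1 / norm x) *\<^sub>R x)" by (intro x0(2)) simp
    also have "\<dots> = ?q x / (norm x)\<^sup>2"
      by (simp add: matrix_vector_mult_scaleR power2_eq_square)
    finally show ?thesis using False by (simp add: field_simps power2_norm_eq_inner)
  qed simp
  with pos that show ?thesis by blast
qed

lemma abs_quad_form_le: "\<bar>x \<bullet> (D *v x)\<bar> \<le> (\<Sum>i\<in>UNIV. \<Sum>j\<in>UNIV. \<bar>D $ i $ j\<bar>) * (x \<bullet> x)"
proof -
  have entry: "\<bar>x $ i\<bar> * \<bar>x $ j\<bar> \<le> x \<bullet> x" for i j
  proof -
    have "\<bar>x $ i\<bar> * \<bar>x $ j\<bar> \<le> norm x * norm x"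
      by (intro mult_mono component_le_norm_cart) auto
    then show ?thesis by (simp add: power2_norm_eq_inner[symmetric] power2_eq_square)
  qed
  have "x \<bullet> (D *v x) = (\<Sum>i\<in>UNIV. \<Sum>j\<in>UNIV. D $ i $ j * (x $ i * x $ j))"
    by (simp add: inner_vec_def matrix_vector_mult_def sum_distrib_left mult_ac)
  also have "\<bar>\<dots>\<bar> \<le> (\<Sum>i\<in>UNIV. \<Sum>j\<in>UNIV. \<bar>D $ i $ j\<bar> * (x \<bullet> x))"
    by (rule order_trans[OF sum_abs sum_mono], rule order_trans[OF sum_abs sum_mono])
      (simp add: abs_mult mult_left_mono[OF entry])
  finally show ?thesis by (simp add: sum_distrib_right)
qed

lemma eventually_posdef:
  fixes f :: "'a \<Rightarrow> real^'n^'n"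
  assumes "posdef M" "(f \<longlongrightarrow> M) F" "eventually (\<lambda>s. symmetric_mat (f s)) F"
  shows "eventually (\<lambda>s. posdef (f s)) F"
proof -
  obtain e where e: "e > 0" "\<And>x. e * (x \<bullet> x) \<le> x \<bullet> (M *v x)"
    using posdef_coercive[OF assms(1)] by blast
  define h where "h s = (\<Sum>i\<in>UNIV. \<Sum>j\<in>UNIV. \<bar>(f s - M) $ i $ j\<bar>)" for s
  have "(h \<longlongrightarrow> (\<Sum>i\<in>UNIV. \<Sum>j\<in>UNIV. \<bar>(M - M) $ i $ j\<bar>)) F"
    unfolding h_def using assms(2) by (intro tendsto_intros)
  then have "eventually (\<lambda>s. h s < e) F"
    using e(1) by (simp add: order_tendstoD)
  with assms(3) show ?thesis
  proof eventually_elim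
    case (elim s)
    have "x \<bullet> (f s *v x) > 0" if "x \<noteq> 0" for x
    proof -
      have "x \<bullet> (f s *v x) = x \<bullet> (M *v x) + x \<bullet> ((f s - M) *v x)"
        by (simp add: matrix_vector_mult_diff_rdistrib inner_diff_right)
      moreover have "\<bar>x \<bullet> ((f s - M) *v x)\<bar> \<le> h s * (x \<bullet> x)"
        unfolding h_def by (rule abs_quad_form_le)
      moreover have "h s * (x \<bullet> x) < e * (x \<bullet> x)"
        using elim that by simp
      ultimately show ?thesis using e(2)[of x] by linarith
    qed
    then show ?case using elim by (simp add: posdef_def)
  qed
qed

text \<open>Along the segment from the identity to \<open>M\<close> all matrices are positive definite,
  so the determinant cannot change sign.\<close>

lemma det_posdef_pos:
  assumes "posdef M"
  shows "det M > 0"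
proof (rule ccontr)
  define Z where "Z s = (1 - s) *\<^sub>R mat 1 + s *\<^sub>R M" for s :: real
  have Z_pd: "posdef (Z s)" if s: "0 \<le> s" "s \<le> 1" for s
  proof -
    have "x \<bullet> (Z s *v x) = (1 - s) * (x \<bullet> x) + s * (x \<bullet> (M *v x))" for x
      by (simp add: Z_def matrix_vector_mult_add_rdistrib scaleR_matrix_vector_assoc[symmetric]
          inner_add_right)
    moreover have "0 < (1 - s) * (x \<bullet> x) + s * (x \<bullet> (M *v x))" if "x \<noteq> 0" for x
    proof (cases "s = 1")
      case True
      then show ?thesis using that assms by (simp add: posdef_def)
    next
      case False
      then have "0 < (1 - s) * (x \<bullet> x)" using s that by simp
      moreover have "0 \<le> s * (x \<bullet> (M *v x))" using s posdef_quad_nonneg[OF assms] by simp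
      ultimately show ?thesis by linarith
    qed
    moreover have "transpose (Z s) = Z s"
      using posdef_transpose[OF assms] by (simp add: Z_def transpose_scalar vec_eq_iff transpose_def mat_def)
    ultimately show ?thesis by (simp add: posdef_def symmetric_mat_def)
  qed
  have nonzero: "det (Z s) \<noteq> 0" if "0 \<le> s" "s \<le> 1" for s
    using posdef_invertible[OF Z_pd[OF that]] by (simp add: invertible_det_nz)
  have "(Z has_vector_derivative (M - mat 1)) (at s)" for s
    unfolding Z_def by (auto intro!: derivative_eq_intros simp: algebra_simps)
  then have "continuous (at s) (\<lambda>s. det (Z s))" for s
    by (rule DERIV_continuous[OF has_real_derivative_det_rows])
  then have "continuous_on {0..1} (\<lambda>s. det (Z s))"
    by (simp add: continuous_at_imp_continuous_on)
  moreover assume "\<not> det M > 0"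
  moreover have "Z 0 = mat 1" "Z 1 = M" by (simp_all add: Z_def)
  ultimately obtain s where "0 \<le> s" "s \<le> 1" "det (Z s) = 0"
    using IVT2'[of "\<lambda>s. det (Z s)" 1 0 0] by auto
  with nonzero show False by blast
qed

lemma nonneg_real_continuation [consumes 1, case_names limit extend]:
  fixes P :: "real \<Rightarrow> bool"
  assumes "0 \<le> t"
    and limit: "\<And>t. 0 \<le> t \<Longrightarrow> (\<And>s. 0 \<le> s \<Longrightarrow> s < t \<Longrightarrow> P s) \<Longrightarrow> P t"
    and extend: "\<And>t. 0 \<le> t \<Longrightarrow> P t \<Longrightarrow> eventually P (at_right t)"
  shows "P t"
proof (rule ccontr)
  define N where "N = {s. 0 \<le> s \<and> \<not> P s}"
  assume "\<not> P t"
  with \<open>0 \<le> t\<close> have N: "N \<noteq> {}" "bdd_below N"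
    by (auto simp: N_def bdd_below_def)
  define \<tau> where "\<tau> = Inf N"
  have \<tau>: "0 \<le> \<tau>"
    unfolding \<tau>_def using N by (intro cInf_greatest) (auto simp: N_def)
  have "P s" if "0 \<le> s" "s < \<tau>" for s
    using that cInf_lower[OF _ N(2), of s] by (force simp: N_def \<tau>_def)
  then have "P \<tau>" by (rule limit[OF \<tau>])
  obtain b where b: "b > \<tau>" "\<And>s. \<tau> < s \<Longrightarrow> s < b \<Longrightarrow> P s"
    using extend[OF \<tau> \<open>P \<tau>\<close>] by (subst (asm) eventually_at_right[OF less_add_one]) blast
  have "b \<le> \<tau>"
    unfolding \<tau>_def
  proof (rule cInf_greatest[OF N(1)])
    fix s assume "s \<in> N"
    moreover have "\<tau> \<le> s" using cInf_lower[OF \<open>s \<in> N\<close> N(2)] by (simp add: \<tau>_def)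
    ultimately show "b \<le> s"
      using \<open>P \<tau>\<close> b(2) by (force simp: N_def)
  qed
  with b(1) show False by simp
qed

section \<open>The first-ansatz vector field\<close>

definition schur_mat :: "real^'n^'n \<Rightarrow> ('m::finite \<Rightarrow> real^'n^'n) \<Rightarrow> real^'n^'n \<Rightarrow> real^'m^'m" where
  "schur_mat C A X = constr_mat A ** Gmat C X ** transpose (constr_mat A)"

definition ansatz_field ::
    "real^'n^'n \<Rightarrow> ('m::finite \<Rightarrow> real^'n^'n) \<Rightarrow> real^'n^'n \<Rightarrow> real^('n \<times> 'n)" where
  "ansatz_field C A X = - ((mat 1 - Gmat C X ** transpose (constr_mat A)
      ** matrix_inv (schur_mat C A X) ** constr_mat A) ** Gmat C X) *v vecm C"

lemma ansatz_field_eq: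
  "ansatz_field C A X = Gmat C X *v (transpose (constr_mat A) *v (matrix_inv (schur_mat C A X)
      *v (constr_mat A *v (Gmat C X *v vecm C)))) - Gmat C X *v vecm C"
proof -
  have neg: "(- M) *v v = - (M *v v)" for M :: "real^'k^'k" and v
    by (simp add: vec_eq_iff matrix_vector_mult_def sum_negf)
  show ?thesis
    unfolding ansatz_field_def neg
    by (simp add: matrix_vector_mul_assoc[symmetric] matrix_vector_mult_diff_rdistrib
        del: transpose_matrix_vector)
qed

lemma symmetric_mat_sum:
  assumes "\<And>l. symmetric_mat (A l)"
  shows "symmetric_mat (\<Sum>l\<in>L. c l *\<^sub>R A l)"
proof -
  have "transpose (\<Sum>l\<in>L. c l *\<^sub>R A l) = (\<Sum>l\<in>L. c l *\<^sub>R transpose (A l))"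
    by (induction L rule: infinite_finite_induct)
      (simp_all add: transpose_add transpose_scalar transpose_mat[of 0, simplified])
  then show ?thesis using assms by (simp add: symmetric_mat_def)
qed

lemma ansatz_field_symmetric:
  assumes "posdef C" "\<forall>l. symmetric_mat (A l)" "vecm Y = ansatz_field C A X"
  shows "symmetric_mat Y"
proof -
  let ?P = "matrix_inv C"
  have P: "transpose ?P = ?P" using posdef_transpose[OF posdef_matrix_inv[OF assms(1)]] .
  define F where "F B = (1/2) *\<^sub>R (X ** B ** ?P + ?P ** B ** transpose X)" for B
  have F_symmetric: "symmetric_mat (F B)" if "symmetric_mat B" for B
    using that P by (simp add: F_def symmetric_mat_def transpose_scalar transpose_add
        matrix_transpose_mul matrix_mul_assoc add.commute)
  define S where "S = (\<Sum>l\<in>UNIV. (matrix_inv (schur_mat C A X)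
      *v (constr_mat A *v (Gmat C X *v vecm C))) $ l *\<^sub>R A l)"
  have "vecm Y = vecm (F S - F C)"
    using assms(3) by (simp add: ansatz_field_eq transpose_constr_mat_mult Gmat_mult_vecm[OF P]
        F_def S_def vecm_diff del: transpose_matrix_vector)
  then have "Y = F S - F C" by (simp add: vecm_inject)
  moreover have "symmetric_mat S" "symmetric_mat C"
    using assms(1,2) by (simp_all add: S_def symmetric_mat_sum posdef_def)
  ultimately show ?thesis
    using F_symmetric by (simp add: symmetric_mat_def transpose_diff)
qed

lemma possemidef_sandwich:
  assumes "posdef P" "symmetric_mat S"
  shows "possemidef (S ** P ** S)" and "S ** P ** S = 0 \<Longrightarrow> S = 0"
proof -
  have quad: "x \<bullet> ((S ** P ** S) *v x) = (S *v x) \<bullet> (P *v (S *v x))" for x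
    using inner_matrix_vector_mult[of x S] assms(2)
    by (simp add: matrix_vector_mul_assoc[symmetric] symmetric_mat_def del: transpose_matrix_vector)
  have "symmetric_mat (S ** P ** S)"
    using assms posdef_transpose[OF assms(1)]
    by (simp add: symmetric_mat_def matrix_transpose_mul matrix_mul_assoc)
  then show "possemidef (S ** P ** S)"
    by (simp add: possemidef_def quad posdef_quad_nonneg[OF assms(1)])
  assume "S ** P ** S = 0"
  then have "S *v x = 0" for x
    using quad[of x] assms(1) unfolding posdef_def by force
  then show "S = 0" by (simp add: matrix_eq)
qed

lemma posdef_schur_mat:
  assumes C_pd: "posdef C" and A_sym: "\<forall>l. symmetric_mat (A l)"
    and A_indep: "\<forall>c :: 'm::finite \<Rightarrow> real. (\<Sum>l\<in>UNIV. c l *\<^sub>R A l) = 0 \<longrightarrow> (\<forall>l. c l = 0)"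
    and X_pd: "posdef X"
  shows "posdef (schur_mat C A X)"
proof -
  let ?P = "matrix_inv C" and ?G = "Gmat C X" and ?A = "constr_mat A"
  have P_pd: "posdef ?P" by (rule posdef_matrix_inv[OF C_pd])
  have G: "transpose ?G = ?G"
    using posdef_transpose[OF P_pd] posdef_transpose[OF X_pd] by (rule transpose_Gmat)
  have "symmetric_mat (schur_mat C A X)"
    by (simp add: schur_mat_def symmetric_mat_def matrix_transpose_mul matrix_mul_assoc G)
  moreover have "y \<bullet> (schur_mat C A X *v y) > 0" if "y \<noteq> 0" for y
  proof -
    define S where "S = (\<Sum>l\<in>UNIV. y $ l *\<^sub>R A l)"
    have S: "symmetric_mat S" using A_sym by (simp add: S_def symmetric_mat_sum)
    have "S \<noteq> 0"
    proof
      assume "S = 0"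
      then have "\<forall>l. y $ l = 0" using A_indep by (simp add: S_def)
      then show False using that by (simp add: vec_eq_iff)
    qed
    then have "S ** ?P ** S \<noteq> 0" using possemidef_sandwich(2)[OF P_pd S] by blast
    then have pos: "trace (X ** (S ** ?P ** S)) > 0"
      using trace_posdef_possemidef_pos[OF X_pd possemidef_sandwich(1)[OF P_pd S]] by blast
    have "y \<bullet> (schur_mat C A X *v y) = vecm S \<bullet> (?G *v vecm S)"
      using inner_matrix_vector_mult[of y ?A]
      by (simp add: schur_mat_def matrix_vector_mul_assoc[symmetric] transpose_constr_mat_mult S_def
          del: transpose_matrix_vector)
    also have "\<dots> = (trace (S ** (X ** S ** ?P)) + trace (S ** (?P ** S ** X))) / 2"
      using S posdef_transpose[OF P_pd] posdef_transpose[OF X_pd]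
      by (simp add: Gmat_mult_vecm inner_vecm_trace symmetric_mat_def vecm_add vecm_scaleR
          inner_add_right matrix_add_ldistrib trace_add)
    also have "\<dots> = trace (X ** (S ** ?P ** S))"
      using trace_mul_sym[of S "X ** S ** ?P"] trace_mul_sym[of "S ** ?P ** S" X]
      by (simp add: matrix_mul_assoc)
    finally show ?thesis using pos by simp
  qed
  ultimately show ?thesis by (simp add: posdef_def)
qed

lemma constr_mat_ansatz_field:
  assumes "invertible (schur_mat C A X)"
  shows "constr_mat A *v ansatz_field C A X = 0"
proof -
  have "constr_mat A *v (Gmat C X *v (transpose (constr_mat A) *v (matrix_inv (schur_mat C A X) *v v))) = v"
    for v
    using matrix_inv_right[OF assms]
    by (simp add: schur_mat_def matrix_vector_mul_assoc matrix_mul_assoc del: transpose_matrix_vector)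
  then show ?thesis
    by (simp add: ansatz_field_eq matrix_vector_mult_diff_distrib del: transpose_matrix_vector)
qed

lemma inner_vecm_inv_ansatz_field:
  fixes X :: "real^'n^'n"
  assumes C_pd: "posdef C" and X_pd: "posdef X"
    and X_feas: "constr_mat A *v vecm X = b"
    and Cinv_feas: "\<forall>l. trace (A l ** matrix_inv C) = b $ l"
  shows "vecm (matrix_inv X) \<bullet> ansatz_field C A X =
    - real CARD('n) + b \<bullet> (matrix_inv (schur_mat C A X) *v b)"
proof -
  let ?P = "matrix_inv C" and ?Y = "matrix_inv X" and ?G = "Gmat C X" and ?A = "constr_mat A"
  have P: "transpose ?P = ?P" using posdef_transpose[OF posdef_matrix_inv[OF C_pd]] .
  have X: "transpose X = X" using posdef_transpose[OF X_pd] .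
  have Y: "transpose ?Y = ?Y" using posdef_transpose[OF posdef_matrix_inv[OF X_pd]] .
  have CP: "C ** ?P = mat 1" "?P ** C = mat 1" and XY: "X ** ?Y = mat 1" "?Y ** X = mat 1"
    using C_pd X_pd by (simp_all add: posdef_invertible matrix_inv_right matrix_inv_left)
  have G_C: "?G *v vecm C = vecm X"
    using P X by (simp add: Gmat_mult_vecm matrix_mul_assoc CP vecm_add scaleR_right_distrib
        flip: matrix_mul_assoc scaleR_add_left)
  have G_Y: "?G *v vecm ?Y = vecm ?P"
    using P X by (simp add: Gmat_mult_vecm Y XY vecm_add vecm_scaleR scaleR_right_distrib
        flip: matrix_mul_assoc scaleR_add_left)
  have "(?A *v vecm ?P) $ l = b $ l" for l
  proof -
    have "(?A *v vecm ?P) $ l = vecm ?P \<bullet> vecm (A l)"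
      by (simp add: constr_mat_mult_nth inner_commute)
    also have "\<dots> = trace (A l ** ?P)"
      by (simp add: inner_vecm_trace P trace_mul_sym[of ?P])
    finally show ?thesis using Cinv_feas by simp
  qed
  then have A_P: "?A *v vecm ?P = b" by (simp add: vec_eq_iff)
  have "vecm ?Y \<bullet> (?G *v (transpose ?A *v (matrix_inv (schur_mat C A X) *v b))) =
      b \<bullet> (matrix_inv (schur_mat C A X) *v b)"
    using transpose_Gmat[OF P X]
    by (simp add: inner_matrix_vector_mult[of "vecm ?Y"] inner_matrix_vector_mult[of _ "transpose ?A"]
        G_Y A_P del: transpose_matrix_vector)
  moreover have "vecm ?Y \<bullet> vecm X = real CARD('n)"
    by (simp add: inner_vecm_trace Y XY trace_def mat_def)
  ultimately show ?thesis
    by (simp add: ansatz_field_eq G_C X_feas inner_diff_right)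
qed

section \<open>Trajectories of the first-ansatz dynamics\<close>

locale ansatz_trajectory =
  fixes C :: "real^'n^'n"
    and A :: "'m::finite \<Rightarrow> real^'n^'n"
    and b :: "real^'m"
    and X X' :: "real \<Rightarrow> real^'n^'n"
  assumes C_pd: "posdef C"
    and A_sym: "\<forall>l. symmetric_mat (A l)"
    and A_indep: "\<forall>c :: 'm \<Rightarrow> real. (\<Sum>l\<in>UNIV. c l *\<^sub>R A l) = 0 \<longrightarrow> (\<forall>l. c l = 0)"
    and Cinv_feas: "\<forall>l. trace (A l ** matrix_inv C) = b $ l"
    and X_deriv: "\<forall>t\<ge>0. (X has_vector_derivative X' t) (at t within {0..})"
    and X_ode: "\<forall>t\<ge>0. vecm (X' t) = ansatz_field C A (X t)"
    and X0_pd: "posdef (X 0)"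
    and X0_feas: "constr_mat A *v vecm (X 0) = b"
begin

definition rate :: "real \<Rightarrow> real" where
  "rate t = - real CARD('n) + b \<bullet> (matrix_inv (schur_mat C A (X t)) *v b)"

lemma rate_ge_neg_dim: "posdef (X t) \<Longrightarrow> - real CARD('n) \<le> rate t"
  unfolding rate_def
  by (simp add: posdef_quad_nonneg posdef_matrix_inv posdef_schur_mat C_pd A_sym A_indep)

lemma X_deriv_on: "s \<in> {0..t} \<Longrightarrow> (X has_vector_derivative X' s) (at s within {0..t})"
  using X_deriv by (auto intro: has_vector_derivative_within_subset)

lemma X_symmetric:
  assumes "0 \<le> t"
  shows "symmetric_mat (X t)"
proof -
  have "linear (\<lambda>M::real^'n^'n. transpose M - M)"
    by (rule linearI) (simp_all add: vec_eq_iff transpose_def algebra_simps)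
  moreover have "transpose (X' s) - X' s = 0" if "s \<in> {0..t}" for s
    using ansatz_field_symmetric[OF C_pd A_sym] X_ode that by (simp add: symmetric_mat_def)
  ultimately have "transpose (X t) - X t = transpose (X 0) - X 0"
    using assms by (intro linear_const_if_derivative_kernel[of _ "{0..t}" X X']) (auto intro: X_deriv_on)
  then show ?thesis using X0_pd by (simp add: posdef_def symmetric_mat_def)
qed

lemma X_feasible:
  assumes "0 \<le> t" "\<forall>s\<in>{0..t}. posdef (X s)"
  shows "constr_mat A *v vecm (X t) = b"
proof -
  have "linear (\<lambda>M. constr_mat A *v vecm M)"
    by (rule linear_compose[OF linear_vecm matrix_vector_mul_linear, unfolded o_def])
  moreover have "constr_mat A *v vecm (X' s) = 0" if "s \<in> {0..t}" for s
    using that assms(2) X_ode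
      constr_mat_ansatz_field[OF posdef_invertible[OF posdef_schur_mat[OF C_pd A_sym A_indep]]]
    by auto
  ultimately have "constr_mat A *v vecm (X t) = constr_mat A *v vecm (X 0)"
    using assms by (intro linear_const_if_derivative_kernel[of _ "{0..t}" X X']) (auto intro: X_deriv_on)
  then show ?thesis using X0_feas by simp
qed

lemma ln_det_X_has_derivative:
  assumes "0 \<le> t" "\<forall>s\<in>{0..t}. posdef (X s)"
  shows "((\<lambda>s. ln (det (X s))) has_real_derivative rate t) (at t within {0..})"
proof -
  have pd: "posdef (X t)" using assms by simp
  have "trace (matrix_inv (X t) ** X' t) = vecm (matrix_inv (X t)) \<bullet> vecm (X' t)"
    using posdef_transpose[OF posdef_matrix_inv[OF pd]] by (simp add: inner_vecm_trace)
  also have "\<dots> = vecm (matrix_inv (X t)) \<bullet> ansatz_field C A (X t)"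
    using X_ode assms(1) by simp
  also have "\<dots> = rate t"
    unfolding rate_def using C_pd pd X_feasible[OF assms] Cinv_feas by (rule inner_vecm_inv_ansatz_field)
  finally show ?thesis
    using has_real_derivative_ln_det[of X "X' t" t, OF _ det_posdef_pos[OF pd]] X_deriv assms(1)
    by simp
qed

lemma det_X_lower_bound:
  assumes "0 \<le> t" "\<forall>s\<in>{0..t}. posdef (X s)"
  shows "det (X 0) * exp (- real CARD('n) * t) \<le> det (X t)"
proof -
  define L where "L s = ln (det (X s)) + real CARD('n) * s" for s
  have L_deriv: "(L has_real_derivative rate s + real CARD('n)) (at s within {0..})" if "s \<in> {0..t}" for s
  proof -
    have "((\<lambda>s. real CARD('n) * s) has_real_derivative real CARD('n)) (at s within {0..})"
      by (auto intro!: derivative_eq_intros)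
    then show ?thesis
      unfolding L_def using that assms by (intro DERIV_add ln_det_X_has_derivative) auto
  qed
  have "L 0 \<le> L t"
  proof (rule DERIV_nonneg_imp_increasing_open[OF assms(1)])
    fix s assume s: "0 < s" "s < t"
    then have "at s within {0..} = at s" by (intro at_within_open_subset[of _ "{0<..}"]) auto
    then show "\<exists>y. (L has_real_derivative y) (at s) \<and> 0 \<le> y"
      using L_deriv[of s] rate_ge_neg_dim[of s] assms(2) s by auto
  next
    have "continuous (at s within {0..t}) L" if "s \<in> {0..t}" for s
      using DERIV_subset[OF L_deriv[OF that], of "{0..t}"] by (auto intro: DERIV_continuous)
    then show "continuous_on {0..t} L" by (simp add: continuous_on_eq_continuous_within)
  qed
  then have "ln (det (X 0)) - real CARD('n) * t \<le> ln (det (X t))"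
    by (simp add: L_def)
  then have "exp (ln (det (X 0)) - real CARD('n) * t) \<le> exp (ln (det (X t)))"
    by simp
  then show ?thesis
    using det_posdef_pos[OF X0_pd] det_posdef_pos[of "X t"] assms
    by (simp add: exp_diff exp_minus field_simps)
qed

lemma X_tendsto: "0 \<le> t \<Longrightarrow> (X \<longlongrightarrow> X t) (at t within {0..})"
  using X_deriv has_vector_derivative_continuous[of X "X' t" t "{0..}"] by (simp add: continuous_within)

lemma X_posdef_at_limit:
  assumes "0 < t" "\<And>s. 0 \<le> s \<Longrightarrow> s < t \<Longrightarrow> posdef (X s)"
  shows "posdef (X t)"
proof -
  define c where "c = det (X 0) * exp (- real CARD('n) * t)"
  have "c > 0" using det_posdef_pos[OF X0_pd] by (simp add: c_def)
  have left: "at_left t = at t within {0..t}" using assms(1) by (simp add: at_within_Icc_at_left)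
  have lim: "(X \<longlongrightarrow> X t) (at_left t)"
    unfolding left using X_tendsto[of t] assms(1) by (auto elim: tendsto_within_subset)
  have before: "eventually (\<lambda>s. 0 < s \<and> s < t) (at_left t)"
    using eventually_at_left_real[OF assms(1)] by (simp add: eventually_mono)
  have "possemidef (X t)"
    using lim trivial_limit_at_left_real
  proof (rule possemidef_limit)
    show "eventually (\<lambda>s. possemidef (X s)) (at_left t)"
      using before by eventually_elim (simp add: posdef_imp_possemidef assms(2))
  qed
  moreover have "c \<le> det (X t)"
  proof (rule tendsto_lowerbound[OF _ _ trivial_limit_at_left_real])
    have "continuous (at t within {0..}) (\<lambda>s. det (X s))"
      using X_deriv assms(1) has_real_derivative_det_rows[of X "X' t" t "{0..}"]
      by (auto intro: DERIV_continuous)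
    then show "((\<lambda>s. det (X s)) \<longlongrightarrow> det (X t)) (at_left t)"
      unfolding left continuous_within by (auto elim: tendsto_within_subset)
    show "eventually (\<lambda>s. c \<le> det (X s)) (at_left t)"
      using before
    proof eventually_elim
      case (elim s)
      then have "c \<le> det (X 0) * exp (- real CARD('n) * s)"
        using det_posdef_pos[OF X0_pd] by (simp add: c_def mult_left_mono)
      also have "\<dots> \<le> det (X s)"
        using elim assms(2) by (intro det_X_lower_bound) auto
      finally show ?case .
    qed
  qed
  ultimately show ?thesis
    using \<open>c > 0\<close> by (simp add: posdef_iff_possemidef_invertible invertible_det_nz)
qed

lemma X_posdef: "0 \<le> t \<Longrightarrow> posdef (X t)"
proof (induction t rule: nonneg_real_continuation)
  case (limit t)
  then show ?case using X0_pd X_posdef_at_limit by (cases "t = 0") auto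
next
  case (extend t)
  have "(X \<longlongrightarrow> X t) (at_right t)"
    using X_tendsto[OF extend(1)] by (rule tendsto_within_subset) (use extend(1) in auto)
  moreover have "eventually (\<lambda>s. symmetric_mat (X s)) (at_right t)"
    using eventually_at_right_less[of t] by eventually_elim (use extend(1) in \<open>auto intro: X_symmetric\<close>)
  ultimately show ?case using extend(2) by (rule eventually_posdef[rotated])
qed

end

theorem theorem4p2:
  fixes C :: "real^'n^'n"
    and A :: "'m::finite \<Rightarrow> real^'n^'n"
    and b :: "real^'m"
    and X X' :: "real \<Rightarrow> real^'n^'n"
  assumes C_pd: "posdef C"
    and A_sym: "\<forall>l. symmetric_mat (A l)"
    and A_indep: "\<forall>c :: 'm \<Rightarrow> real. (\<Sum>l\<in>UNIV. c l *\<^sub>R A l) = 0 \<longrightarrow> (\<forall>l. c l = 0)"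
    and Cinv_feas: "\<forall>l. trace (A l ** matrix_inv C) = b $ l"
    and X_deriv: "\<forall>t\<ge>0. (X has_vector_derivative X' t) (at t within {0..})"
    and X_ode: "\<forall>t\<ge>0. vecm (X' t) =
        - ((mat 1 - Gmat C (X t) ** transpose (constr_mat A)
              ** matrix_inv (constr_mat A ** Gmat C (X t) ** transpose (constr_mat A))
              ** constr_mat A) ** Gmat C (X t)) *v vecm C"
    and X0_pd: "posdef (X 0)"
    and X0_feas: "constr_mat A *v vecm (X 0) = b"
  shows "(\<forall>t\<ge>0. posdef (X t) \<longrightarrow>
            ((\<lambda>s. ln (det (X s))) has_real_derivative
               (- real CARD('n) + b \<bullet> (matrix_inv (constr_mat A ** Gmat C (X t) ** transpose (constr_mat A)) *v b)))
               (at t within {0..})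
            \<and> - real CARD('n) + b \<bullet> (matrix_inv (constr_mat A ** Gmat C (X t) ** transpose (constr_mat A)) *v b)
                \<ge> - real CARD('n))
         \<and> (\<forall>T\<ge>0. posdef (X T))"
proof -
  interpret ansatz_trajectory C A b X X'
    using assms by unfold_locales (simp_all add: ansatz_field_def schur_mat_def)
  have "((\<lambda>s. ln (det (X s))) has_real_derivative rate t) (at t within {0..}) \<and> - real CARD('n) \<le> rate t"
    if "0 \<le> t" for t
    using that X_posdef by (simp add: ln_det_X_has_derivative rate_ge_neg_dim)
  then show ?thesis
    using X_posdef by (simp add: rate_def schur_mat_def)
qed

end
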